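(* Let $n\in\mathbb N$ and $p_0\in PH$. Then there exists a (mild) solution $(p(t),q(t))$, $t\in[0,n]$, with $p(t)\in PH$, $q(t)\in QH$, of the system $$\frac{dp}{dt}+Ap=PF(p+q),\qquad \frac{dq}{dt}+Aq=QF(p+q),$$ satisfying the boundary conditions $p(n)=p_0$ and $q(0)=0$.
   Context: Standing assumptions: $H$ is a real Hilbert space with norm $|\cdot|$. $A$ is a linear, closed, unbounded, positive self-adjoint operator on $H$ with compact inverse, so $H$ has an orthonormal basis of eigenvectors of $A$ with eigenvalues $0<\lambda_1<\lambda_2\le\cdots\le\lambda_N<\lambda_{N+1}\le\cdots\to\infty$ (counted with multiplicity). $F:H\to H$ satisfies $|F(u)|\le K_0$ and $|F(u)-F(v)|\le K_1|u-v|$ for all $u,v\in H$, with constants $K_0,K_1>0$ and $K_1<\lambda_{N+1}$; moreover there is $R>0$ with $F(u)=0$ whenever $|u|\ge R$. $P$ is the orthogonal (spectral) projection onto the span of the first $N$ eigenvectors of $A$, and $Q=I-P$; every $u\in H$ is written $u=p+q$ with $p=Pu\in PH$, $q=Qu\in QH$. A solution on an interval $[t_0,t_1]$ means a continuous function satisfying the variation of constants formula $u(t)=e^{-A(t-s)}u(s)+\int_s^t e^{-A(t-\tau)}F(u(\tau))\,d\tau$ for $t_0\le s\le t\le t_1$ (equivalently the corresponding formulas for the $P$- and $Q$-components). *)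

theory Defs
  imports "HOL-Analysis.Analysis"
begin

text \<open>The operator A is represented through its spectral data: an orthonormal
basis e of eigenvectors (e k has eigenvalue lam k; index k corresponds to
the paper's index k+1).\<close>

definition Pproj :: "(nat \<Rightarrow> 'a::real_inner) \<Rightarrow> nat \<Rightarrow> 'a \<Rightarrow> 'a" where
  "Pproj e N u = (\<Sum>k<N. (u \<bullet> e k) *\<^sub>R e k)"

definition Qproj :: "(nat \<Rightarrow> 'a::real_inner) \<Rightarrow> nat \<Rightarrow> 'a \<Rightarrow> 'a" where
  "Qproj e N u = u - Pproj e N u"

text \<open>The analytic semigroup exp(-A t) applied to u (used for t \<ge> 0).\<close>
definition semigrp :: "(nat \<Rightarrow> 'a::{real_inner,complete_space}) \<Rightarrow> (nat \<Rightarrow> real) \<Rightarrow> real \<Rightarrow> 'a \<Rightarrow> 'a" where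
  "semigrp e lam t u = (\<Sum>k. (exp (- lam k * t) * (u \<bullet> e k)) *\<^sub>R e k)"

end

theory Submission
  imports Defs "HOL-Homology.Homology"
begin

text \<open>For each initial value \<open>\<xi>\<close> the mild equation
  \<open>u(t) = e^(-tA) \<xi> + \<integral>\<^sub>0\<^sup>t e^(-(t-\<tau>)A) F(u(\<tau>)) d\<tau>\<close> has a unique continuous solution on
  \<open>[0, n]\<close>, the fixed point of a contraction in an exponentially weighted sup norm, and it depends
  Lipschitz continuously on \<open>\<xi>\<close>. Starting from \<open>\<xi> \<in> PH\<close> gives \<open>q(0) = Q\<xi> = 0\<close>, so only
  \<open>P u(n) = p\<^sub>0\<close> remains. On the finite-dimensional space \<open>PH\<close> the operator \<open>e^(-nA)\<close> is
  invertible and \<open>P u(n) = e^(-nA) \<xi> + G(\<xi>)\<close> with \<open>G\<close> continuous and bounded by \<open>K\<^sub>0 n\<close>; hence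
  \<open>\<xi> \<mapsto> e^(nA) (p\<^sub>0 - G(\<xi>))\<close> maps a large ball of \<open>PH\<close> into itself and has a fixed point by
  Brouwer's theorem, obtained here from the non-contractibility of spheres.\<close>

section \<open>Orthonormal spans and Brouwer's fixed point theorem\<close>

lemma orthonormal_span_expansion:
  fixes e :: "nat \<Rightarrow> 'a::real_inner"
  assumes orth: "\<forall>j k. e j \<bullet> e k = (if j = k then 1 else 0)"
    and v: "v \<in> span (e ` {..<N})"
  shows "v = (\<Sum>i<N. (v \<bullet> e i) *\<^sub>R e i)"
proof (rule span_induct[OF v])
  fix x assume "x \<in> e ` {..<N}"
  then obtain k where k: "k < N" "x = e k" by auto
  have "(\<Sum>i<N. (x \<bullet> e i) *\<^sub>R e i) = (\<Sum>i<N. if i = k then e k else 0)"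
    using orth k by (intro sum.cong) auto
  then show "x = (\<Sum>i<N. (x \<bullet> e i) *\<^sub>R e i)" using k by simp
next
  have "linear (\<lambda>v. v - (\<Sum>i<N. (v \<bullet> e i) *\<^sub>R e i))"
    by (rule linearI) (simp_all add: inner_add_left scaleR_add_left sum.distrib
        scaleR_right.sum scaleR_diff_right)
  from linear_subspace_kernel[OF this]
  show "subspace {v. v = (\<Sum>i<N. (v \<bullet> e i) *\<^sub>R e i)}" by simp
qed

lemma norm_sum_orthonormal_squared:
  fixes e :: "nat \<Rightarrow> 'a::real_inner"
  assumes orth: "\<forall>j k. e j \<bullet> e k = (if j = k then 1 else 0)" and "finite A"
  shows "(norm (\<Sum>i\<in>A. a i *\<^sub>R e i))\<^sup>2 = (\<Sum>i\<in>A. (a i)\<^sup>2)"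
proof -
  have "(norm (\<Sum>i\<in>A. a i *\<^sub>R e i))\<^sup>2 = (\<Sum>i\<in>A. a i *\<^sub>R e i) \<bullet> (\<Sum>i\<in>A. a i *\<^sub>R e i)"
    by (simp add: power2_norm_eq_inner)
  then show ?thesis
    by (simp add: inner_sum_left inner_sum_right orth assms(2) power2_eq_square if_distrib cong: if_cong)
qed

lemma homeomorphic_maps_Euclidean_space_orthonormal_span:
  fixes e :: "nat \<Rightarrow> 'a::real_inner"
  assumes orth: "\<forall>j k. e j \<bullet> e k = (if j = k then 1 else 0)"
  shows "homeomorphic_maps (Euclidean_space N) (top_of_set (span (e ` {..<N})))
    (\<lambda>x. \<Sum>i<N. x i *\<^sub>R e i) (\<lambda>v i. if i < N then v \<bullet> e i else 0)"
  unfolding homeomorphic_maps_def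
proof (intro conjI)
  let ?h = "\<lambda>x. \<Sum>i<N. x i *\<^sub>R e i" and ?g = "\<lambda>v i. if i < N then v \<bullet> e i else (0::real)"
  have "continuous_map euclidean (top_of_set (span (e ` {..<N}))) ?h"
    by (rule continuous_map_span_sum) auto
  then show "continuous_map (Euclidean_space N) (top_of_set (span (e ` {..<N}))) ?h"
    unfolding Euclidean_space_def
    by (intro continuous_map_from_subtopology) (simp add: euclidean_product_topology)
  have "continuous_map (top_of_set (span (e ` {..<N}))) euclideanreal (\<lambda>v. ?g v k)" for k
    by (cases "k < N") (simp_all add: continuous_on_inner continuous_on_id continuous_on_const)
  then show "continuous_map (top_of_set (span (e ` {..<N}))) (Euclidean_space N) ?g"
    unfolding Euclidean_space_def
    by (auto simp: continuous_map_in_subtopology continuous_map_componentwise_UNIV)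
  have "?h x \<bullet> e k = x k" if "k < N" for x k
    using that by (simp add: inner_sum_left orth if_distrib cong: if_cong)
  then show "\<forall>x\<in>topspace (Euclidean_space N). ?g (?h x) = x"
    by (auto simp: topspace_Euclidean_space)
  show "\<forall>v\<in>topspace (top_of_set (span (e ` {..<N}))). ?h (?g v) = v"
    using orthonormal_span_expansion[OF orth] by auto
qed

lemma homeomorphic_space_nsphere_orthonormal_sphere:
  fixes e :: "nat \<Rightarrow> 'a::real_inner"
  assumes orth: "\<forall>j k. e j \<bullet> e k = (if j = k then 1 else 0)" and N: "1 \<le> N"
  shows "nsphere (N - 1) homeomorphic_space top_of_set (span (e ` {..<N}) \<inter> sphere 0 1)"
proof -
  define V where "V = span (e ` {..<N})"
  define h where "h x = (\<Sum>i<N. x i *\<^sub>R e i)" for x :: "nat \<Rightarrow> real"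
  define g where "g v i = (if i < N then v \<bullet> e i else 0)" for v i
  have hom: "homeomorphic_maps (Euclidean_space (Suc (N - 1))) (top_of_set V) h g"
    using homeomorphic_maps_Euclidean_space_orthonormal_span[OF orth, of N] N
    by (simp add: V_def h_def[abs_def] g_def[abs_def])
  have upto: "{..N - Suc 0} = {..<N}" using N by auto
  have norm_h: "(norm (h x))\<^sup>2 = (\<Sum>i<N. (x i)\<^sup>2)" for x
    unfolding h_def by (rule norm_sum_orthonormal_squared[OF orth]) simp
  have "homeomorphic_maps (nsphere (N - 1)) (subtopology (top_of_set V) (sphere 0 1)) h g"
    unfolding nsphere_def
  proof (rule homeomorphic_maps_subtopologies_alt[OF hom])
    show "h ` (topspace (Euclidean_space (Suc (N - 1))) \<inter> {x. (\<Sum>i\<le>N - 1. (x i)\<^sup>2) = 1})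
        \<subseteq> sphere 0 1"
    proof (rule image_subsetI)
      fix x assume "x \<in> topspace (Euclidean_space (Suc (N - 1))) \<inter> {x. (\<Sum>i\<le>N - 1. (x i)\<^sup>2) = 1}"
      then have "(norm (h x))\<^sup>2 = 1" by (simp add: norm_h upto)
      then show "h x \<in> sphere 0 1" by (simp add: power2_eq_1_iff) (smt (verit) norm_ge_zero)
    qed
    show "g ` (topspace (top_of_set V) \<inter> sphere 0 1) \<subseteq> {x. (\<Sum>i\<le>N - 1. (x i)\<^sup>2) = 1}"
    proof (rule image_subsetI)
      fix v assume v: "v \<in> topspace (top_of_set V) \<inter> sphere 0 1"
      then have "h (g v) = v"
        using orthonormal_span_expansion[OF orth, of v N] by (auto simp: V_def h_def g_def)
      then have "(\<Sum>i<N. (g v i)\<^sup>2) = 1" using norm_h[of "g v"] v by simp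
      then show "g v \<in> {x. (\<Sum>i\<le>N - 1. (x i)\<^sup>2) = 1}" by (simp add: upto)
    qed
  qed
  then show ?thesis
    by (auto simp: homeomorphic_space_def subtopology_subtopology V_def)
qed

lemma not_contractible_orthonormal_sphere:
  fixes e :: "nat \<Rightarrow> 'a::real_inner"
  assumes "\<forall>j k. e j \<bullet> e k = (if j = k then 1 else 0)" and "1 \<le> N"
  shows "\<not> contractible (span (e ` {..<N}) \<inter> sphere 0 1)"
  using homeomorphic_space_contractibility[OF homeomorphic_space_nsphere_orthonormal_sphere[OF assms]]
    non_contractible_space_nsphere by auto

lemma zero_notin_closed_segment_unit_vectors:
  fixes x y :: "'a::real_normed_vector"
  assumes "norm x = 1" "norm y = 1" "y \<noteq> - x"
  shows "0 \<notin> closed_segment x y"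
proof
  assume "0 \<in> closed_segment x y"
  then obtain u where u: "0 \<le> u" "u \<le> 1" and eq: "(1 - u) *\<^sub>R x = u *\<^sub>R (- y)"
    by (auto simp: in_segment eq_neg_iff_add_eq_0)
  then have "norm ((1 - u) *\<^sub>R x) = norm (u *\<^sub>R (- y))" by simp
  then have "u = 1 / 2" using assms u by simp
  with eq have "(1 / 2) *\<^sub>R x = (1 / 2) *\<^sub>R (- y)" by simp
  then have "x = - y" by (rule scaleR_left_imp_eq[rotated]) simp
  with \<open>y \<noteq> - x\<close> show False by simp
qed

lemma homotopic_id_non_antipodal_subspace_sphere:
  fixes g :: "'a::real_normed_vector \<Rightarrow> 'a" and V :: "'a set"
  defines "S \<equiv> V \<inter> sphere 0 1"
  assumes V: "subspace V" and g: "continuous_on S g" "g \<in> S \<rightarrow> S"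
    and non_antipodal: "\<And>x. x \<in> S \<Longrightarrow> g x \<noteq> - x"
  shows "homotopic_with_canon (\<lambda>h. True) S S id g"
proof -
  have "homotopic_with_canon (\<lambda>h. True) S (V - {0}) id g"
  proof (rule homotopic_with_linear)
    show "continuous_on S id" "continuous_on S g" by (simp_all add: g(1))
    fix x assume x: "x \<in> S"
    have "x \<in> V" "norm x = 1" "g x \<in> V" "norm (g x) = 1" using g(2) x by (auto simp: S_def)
    moreover from calculation have "0 \<notin> closed_segment x (g x)"
      using non_antipodal[OF x] by (intro zero_notin_closed_segment_unit_vectors)
    moreover have "closed_segment x (g x) \<subseteq> V"
      using calculation V by (intro closed_segment_subset subspace_imp_convex) auto
    ultimately show "closed_segment (id x) (g x) \<subseteq> V - {0}" by auto
  qed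
  then have "homotopic_with_canon (\<lambda>h. True) S S (sgn \<circ> id) (sgn \<circ> g)"
    by (rule homotopic_with_compose_continuous_left)
      (auto intro!: continuous_intros simp: S_def norm_sgn sgn_div_norm subspace_scale[OF V])
  then show ?thesis
  proof (rule homotopic_with_eq)
    fix x assume "x \<in> topspace (top_of_set S)"
    then have "x \<in> S" "g x \<in> S" using g(2) by auto
    then show "id x = (sgn \<circ> id) x" "g x = (sgn \<circ> g) x"
      by (auto simp: S_def sgn_div_norm)
  qed auto
qed

lemma sgn_diff_neq_minus:
  fixes x y :: "'a::real_normed_vector"
  assumes x: "norm x = 1" and y: "norm y \<le> 1" and "x \<noteq> y"
  shows "sgn (x - y) \<noteq> - x"
proof
  assume "sgn (x - y) = - x"
  define c where "c = norm (x - y)"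
  have c: "c > 0" using \<open>x \<noteq> y\<close> by (simp add: c_def)
  from \<open>sgn (x - y) = - x\<close> have "c *\<^sub>R (inverse c *\<^sub>R (x - y)) = c *\<^sub>R (- x)"
    by (simp add: sgn_div_norm c_def)
  then have "y = (1 + c) *\<^sub>R x" using c by (simp add: algebra_simps)
  then have "norm y = 1 + c" using c x by simp
  with y c show False by simp
qed

lemma fixpoint_subspace_unit_ball:
  fixes f :: "'a::real_normed_vector \<Rightarrow> 'a"
  assumes V: "subspace V" and sphere: "\<not> contractible (V \<inter> sphere 0 1)"
    and f: "continuous_on (V \<inter> cball 0 1) f" "f \<in> V \<inter> cball 0 1 \<rightarrow> V \<inter> cball 0 1"
  shows "\<exists>x \<in> V \<inter> cball 0 1. f x = x"
proof (rule ccontr)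
  \<comment> \<open>Otherwise \<open>g x = sgn (x - f x)\<close> is defined on the contractible ball, hence null-homotopic,
    while on the sphere it is never antipodal to the identity, hence homotopic to it.\<close>
  assume no_fix: "\<not> ?thesis"
  define D where "D = V \<inter> cball (0::'a) 1"
  define S where "S = V \<inter> sphere (0::'a) 1"
  define g where "g x = sgn (x - f x)" for x
  have fD: "f x \<in> V" "norm (f x) \<le> 1" if "x \<in> D" for x
    using funcset_mem[OF f(2)] that by (auto simp: D_def)
  have nz: "x - f x \<noteq> 0" if "x \<in> D" for x
    using no_fix that unfolding D_def by (metis eq_iff_diff_eq_0)
  have g_cont: "continuous_on D g"
    unfolding g_def using nz by (intro continuous_intros f(1)[folded D_def]) auto
  have gD: "g \<in> D \<rightarrow> S"
    using nz fD V by (auto simp: g_def S_def D_def norm_sgn sgn_div_norm intro!: subspace_scale subspace_diff)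
  have "contractible D"
    unfolding D_def by (intro convex_imp_contractible convex_Int subspace_imp_convex V convex_cball)
  then obtain c where "homotopic_with_canon (\<lambda>h. True) D S g (\<lambda>x. c)"
    using nullhomotopic_from_contractible[OF g_cont gD] by blast
  then have g_null: "homotopic_with_canon (\<lambda>h. True) S S g (\<lambda>x. c)"
    by (rule homotopic_with_subset_left) (auto simp: S_def D_def)
  have "homotopic_with_canon (\<lambda>h. True) S S id g"
    unfolding S_def
  proof (rule homotopic_id_non_antipodal_subspace_sphere[OF V])
    show "continuous_on (V \<inter> sphere 0 1) g" "g \<in> V \<inter> sphere 0 1 \<rightarrow> V \<inter> sphere 0 1"
      using g_cont gD by (auto simp: S_def D_def intro: continuous_on_subset)
    fix x assume "x \<in> V \<inter> sphere 0 1"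
    then show "g x \<noteq> - x"
      using fD(2) nz unfolding g_def by (intro sgn_diff_neq_minus) (auto simp: D_def)
  qed
  with g_null have "contractible S"
    unfolding contractible_def by (meson homotopic_with_trans)
  with sphere show False by (simp add: S_def)
qed

section \<open>Diagonal operators on an orthonormal basis\<close>

locale orthonormal_basis =
  fixes e :: "nat \<Rightarrow> 'a::{real_inner,banach}"
  assumes orthonormal: "\<forall>j k. e j \<bullet> e k = (if j = k then 1 else 0)"
    and expansion: "\<forall>u. (\<lambda>k. (u \<bullet> e k) *\<^sub>R e k) sums u"
begin

lemma inner_basis: "e j \<bullet> e k = (if j = k then 1 else 0)"
  using orthonormal by blast

lemma parseval: "(\<lambda>k. (u \<bullet> e k)\<^sup>2) sums (norm u)\<^sup>2"
proof -
  have "(\<lambda>k. u \<bullet> ((u \<bullet> e k) *\<^sub>R e k)) sums (u \<bullet> u)"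
    by (rule bounded_linear.sums[OF bounded_linear_inner_right expansion[rule_format]])
  then show ?thesis by (simp add: power2_eq_square dot_square_norm)
qed

lemma eq_if_coeffs_eq:
  assumes "\<And>k. v \<bullet> e k = w \<bullet> e k"
  shows "v = w"
  using expansion[rule_format, of v] expansion[rule_format, of w] assms
  by (simp add: sums_unique2)

lemma summable_orthonormal_series:
  assumes "summable (\<lambda>k. (b k)\<^sup>2)"
  shows "summable (\<lambda>k. b k *\<^sub>R e k)"
  unfolding summable_Cauchy
proof (intro allI impI)
  fix \<epsilon> :: real assume \<epsilon>: "\<epsilon> > 0"
  then obtain M where M: "\<forall>m\<ge>M. \<forall>n. norm (\<Sum>k=m..<n. (b k)\<^sup>2) < \<epsilon>\<^sup>2"
    using assms unfolding summable_Cauchy by (meson zero_less_power)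
  show "\<exists>M. \<forall>m\<ge>M. \<forall>n. norm (\<Sum>k=m..<n. b k *\<^sub>R e k) < \<epsilon>"
  proof (intro exI allI impI)
    fix m n assume "M \<le> m"
    have "(norm (\<Sum>k=m..<n. b k *\<^sub>R e k))\<^sup>2 = (\<Sum>k=m..<n. (b k)\<^sup>2)"
      by (rule norm_sum_orthonormal_squared[OF orthonormal]) simp
    also have "\<dots> < \<epsilon>\<^sup>2"
      using M \<open>M \<le> m\<close> by (simp add: sum_nonneg)
    finally show "norm (\<Sum>k=m..<n. b k *\<^sub>R e k) < \<epsilon>"
      using \<epsilon> by (rule power2_less_imp_less[OF _ less_imp_le])
  qed
qed

lemma norm_le_if_coeffs_le:
  assumes C: "C \<ge> 0" and le: "\<And>k. \<bar>v \<bullet> e k\<bar> \<le> C * \<bar>u \<bullet> e k\<bar>"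
  shows "norm v \<le> C * norm u"
proof -
  have "(v \<bullet> e k)\<^sup>2 \<le> C\<^sup>2 * (u \<bullet> e k)\<^sup>2" for k
    using power_mono[OF le[of k] abs_ge_zero, of 2] by (simp add: power_mult_distrib)
  then have "(norm v)\<^sup>2 \<le> (C * norm u)\<^sup>2"
    unfolding power_mult_distrib by (rule sums_le[OF _ parseval sums_mult[OF parseval]])
  then show ?thesis
    by (rule power2_le_imp_le) (simp add: C)
qed

definition diag_op :: "(nat \<Rightarrow> real) \<Rightarrow> 'a \<Rightarrow> 'a" where
  "diag_op a u = suminf (\<lambda>k. (a k * (u \<bullet> e k)) *\<^sub>R e k)"

context
  fixes a :: "nat \<Rightarrow> real" and C :: real
  assumes bounded: "\<And>k. \<bar>a k\<bar> \<le> C"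
begin

lemma summable_diag_op: "summable (\<lambda>k. (a k * (u \<bullet> e k)) *\<^sub>R e k)"
proof (rule summable_orthonormal_series[OF summable_comparison_test'])
  show "summable (\<lambda>k. C\<^sup>2 * (u \<bullet> e k)\<^sup>2)"
    using parseval sums_summable summable_mult by blast
  show "norm ((a k * (u \<bullet> e k))\<^sup>2) \<le> C\<^sup>2 * (u \<bullet> e k)\<^sup>2" for k
    using power_mono[OF bounded[of k] abs_ge_zero, of 2] by (simp add: power_mult_distrib mult_right_mono)
qed

lemma inner_diag_op: "diag_op a u \<bullet> e j = a j * (u \<bullet> e j)"
proof -
  have "(\<lambda>k. ((a k * (u \<bullet> e k)) *\<^sub>R e k) \<bullet> e j) sums (diag_op a u \<bullet> e j)"
    unfolding diag_op_def
    by (rule bounded_linear.sums[OF bounded_linear_inner_left summable_sums[OF summable_diag_op]])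
  moreover have "(\<lambda>k. ((a k * (u \<bullet> e k)) *\<^sub>R e k) \<bullet> e j) = (\<lambda>k. if k = j then a j * (u \<bullet> e j) else 0)"
    by (intro ext) (simp add: inner_basis)
  moreover have "(\<lambda>k. if k = j then a j * (u \<bullet> e j) else 0) sums (a j * (u \<bullet> e j))"
    by (rule sums_single)
  ultimately show ?thesis by (metis sums_unique2)
qed

lemma norm_diag_op_le: "norm (diag_op a u) \<le> C * norm u"
proof (rule norm_le_if_coeffs_le)
  show "C \<ge> 0" using bounded[of 0] by simp
  show "\<bar>diag_op a u \<bullet> e k\<bar> \<le> C * \<bar>u \<bullet> e k\<bar>" for k
    using bounded[of k] by (simp add: inner_diag_op abs_mult mult_right_mono)
qed

lemma bounded_linear_diag_op: "bounded_linear (diag_op a)"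
proof (rule bounded_linear_intro[where K = C])
  show "diag_op a (u + v) = diag_op a u + diag_op a v" for u v
    by (rule eq_if_coeffs_eq) (simp add: inner_diag_op inner_add_left algebra_simps)
  show "diag_op a (r *\<^sub>R u) = r *\<^sub>R diag_op a u" for r u
    by (rule eq_if_coeffs_eq) (simp add: inner_diag_op)
  show "norm (diag_op a u) \<le> norm u * C" for u
    using norm_diag_op_le by (simp add: mult.commute)
qed

end

lemma continuous_on_diag_op:
  assumes cont: "\<And>k. continuous_on A (\<lambda>t. a t k)"
    and bounded: "\<And>t k. t \<in> A \<Longrightarrow> \<bar>a t k\<bar> \<le> 1"
  shows "continuous_on A (\<lambda>t. diag_op (a t) u)"
  unfolding continuous_on_def
proof
  fix s assume s: "s \<in> A"
  define \<phi> where "\<phi> t = suminf (\<lambda>k. ((a t k - a s k) * (u \<bullet> e k))\<^sup>2)" for t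
  have norm_eq: "(norm (diag_op (a t) u - diag_op (a s) u))\<^sup>2 = \<phi> t" if "t \<in> A" for t
  proof -
    have "(\<lambda>k. ((diag_op (a t) u - diag_op (a s) u) \<bullet> e k)\<^sup>2) sums (norm (diag_op (a t) u - diag_op (a s) u))\<^sup>2"
      by (rule parseval)
    moreover have "diag_op (a r) u \<bullet> e k = a r k * (u \<bullet> e k)" if "r \<in> A" for r k
      using inner_diag_op[of "a r" 1] bounded[OF that] by blast
    ultimately show ?thesis
      using that s by (simp add: \<phi>_def inner_diff_left left_diff_distrib sums_iff)
  qed
  have "norm (((a t k - a s k) * (u \<bullet> e k))\<^sup>2) \<le> 4 * (u \<bullet> e k)\<^sup>2" if "t \<in> A" for k t
  proof -
    have "\<bar>a t k - a s k\<bar> \<le> 2" using bounded[OF that, of k] bounded[OF s, of k] by linarith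
    from power_mono[OF this abs_ge_zero, of 2] show ?thesis
      by (simp add: power_mult_distrib mult_right_mono)
  qed
  then have "uniform_limit A (\<lambda>n t. \<Sum>k<n. ((a t k - a s k) * (u \<bullet> e k))\<^sup>2) \<phi> sequentially"
    unfolding \<phi>_def using parseval sums_summable summable_mult
    by (intro Weierstrass_m_test[where M = "\<lambda>k. 4 * (u \<bullet> e k)\<^sup>2"]) blast+
  then have "continuous_on A \<phi>"
    by (rule uniform_limit_theorem[rotated]) (auto intro!: always_eventually continuous_intros cont)
  then have "((\<lambda>t. sqrt (\<phi> t)) \<longlongrightarrow> sqrt (\<phi> s)) (at s within A)"
    using s by (intro tendsto_intros) (simp add: continuous_on_def)
  moreover have "\<phi> s = 0" using norm_eq[OF s] by simp
  moreover have "\<forall>\<^sub>F t in at s within A. sqrt (\<phi> t) = norm (diag_op (a t) u - diag_op (a s) u)"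
    unfolding eventually_at_filter by (intro always_eventually) (simp add: norm_eq[symmetric])
  ultimately have "((\<lambda>t. norm (diag_op (a t) u - diag_op (a s) u)) \<longlongrightarrow> 0) (at s within A)"
    by (auto elim: Lim_transform_eventually)
  then show "((\<lambda>t. diag_op (a t) u) \<longlongrightarrow> diag_op (a s) u) (at s within A)"
    by (simp add: tendsto_norm_zero_iff LIM_zero_iff)
qed

end

section \<open>The semigroup and the spectral projections\<close>

lemma norm_has_integral_le:
  fixes f :: "real \<Rightarrow> 'a::real_normed_vector"
  assumes "(f has_integral I) {a..b}" "a \<le> b" "0 \<le> B" "\<And>t. t \<in> {a..b} \<Longrightarrow> norm (f t) \<le> B"
  shows "norm I \<le> B * (b - a)"
  using has_integral_bound[of B f I a b] assms by simp

locale diagonal_semigroup = orthonormal_basis e for e :: "nat \<Rightarrow> 'a::{real_inner,banach}" +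
  fixes lam :: "nat \<Rightarrow> real" and N :: nat
  assumes lam_nonneg: "\<And>k. 0 \<le> lam k"
begin

abbreviation S where "S t \<equiv> semigrp e lam t"
abbreviation P where "P \<equiv> Pproj e N"
abbreviation Q where "Q \<equiv> Qproj e N"

lemma abs_exp_multiplier_le: "t \<ge> 0 \<Longrightarrow> \<bar>exp (- lam k * t)\<bar> \<le> 1"
  using lam_nonneg[of k] by simp

lemma semigrp_eq_diag_op: "S t = diag_op (\<lambda>k. exp (- lam k * t))"
  by (simp add: fun_eq_iff semigrp_def diag_op_def)

lemma inner_semigrp: "t \<ge> 0 \<Longrightarrow> S t u \<bullet> e j = exp (- lam j * t) * (u \<bullet> e j)"
  unfolding semigrp_eq_diag_op by (rule inner_diag_op[OF abs_exp_multiplier_le])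

lemma norm_semigrp_le: "t \<ge> 0 \<Longrightarrow> norm (S t u) \<le> norm u"
  unfolding semigrp_eq_diag_op using norm_diag_op_le[OF abs_exp_multiplier_le] by simp

lemma bounded_linear_semigrp: "t \<ge> 0 \<Longrightarrow> bounded_linear (S t)"
  unfolding semigrp_eq_diag_op by (rule bounded_linear_diag_op[OF abs_exp_multiplier_le])

lemma semigrp_add: "t \<ge> 0 \<Longrightarrow> S t (u + v) = S t u + S t v"
  using bounded_linear_semigrp linear_add bounded_linear.linear by blast

lemma semigrp_diff: "t \<ge> 0 \<Longrightarrow> S t (u - v) = S t u - S t v"
  using bounded_linear_semigrp linear_diff bounded_linear.linear by blast

lemma semigrp_0: "S 0 u = u"
  by (rule eq_if_coeffs_eq) (simp add: inner_semigrp)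

lemma semigrp_semigrp: "s \<ge> 0 \<Longrightarrow> t \<ge> 0 \<Longrightarrow> S t (S s u) = S (t + s) u"
  by (rule eq_if_coeffs_eq) (simp add: inner_semigrp algebra_simps exp_add[symmetric])

lemma inner_Pproj: "P u \<bullet> e j = (if j < N then u \<bullet> e j else 0)"
  by (simp add: Pproj_def inner_sum_left inner_basis if_distrib cong: if_cong)

lemma inner_Qproj: "Q u \<bullet> e j = (if j < N then 0 else u \<bullet> e j)"
  by (simp add: Qproj_def inner_diff_left inner_Pproj)

lemma bounded_linear_Pproj: "bounded_linear P"
  unfolding Pproj_def
  by (intro bounded_linear_sum bounded_linear_compose[OF bounded_linear_scaleR_left bounded_linear_inner_left])

lemma bounded_linear_Qproj: "bounded_linear Q"
  unfolding Qproj_def by (intro bounded_linear_sub[OF bounded_linear_ident bounded_linear_Pproj])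

lemma norm_Pproj_le: "norm (P v) \<le> norm v"
  using norm_le_if_coeffs_le[of 1 "P v" v] by (simp add: inner_Pproj)

lemma Pproj_semigrp: "t \<ge> 0 \<Longrightarrow> P (S t u) = S t (P u)"
  by (rule eq_if_coeffs_eq) (simp add: inner_semigrp inner_Pproj)

lemma Qproj_semigrp: "t \<ge> 0 \<Longrightarrow> Q (S t u) = S t (Q u)"
  by (rule eq_if_coeffs_eq) (simp add: inner_semigrp inner_Qproj)

lemma range_Pproj: "range P = {v. \<forall>j\<ge>N. v \<bullet> e j = 0}"
proof (intro equalityI subsetI)
  fix v assume "v \<in> {v. \<forall>j\<ge>N. v \<bullet> e j = 0}"
  then have "v = P v" by (intro eq_if_coeffs_eq) (simp add: inner_Pproj)
  then show "v \<in> range P" by blast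
qed (auto simp: inner_Pproj)

lemma range_Pproj_eq_span: "range P = span (e ` {..<N})"
proof (intro equalityI subsetI)
  fix v assume "v \<in> range P"
  then obtain u where "v = P u" by blast
  moreover have "P u \<in> span (e ` {..<N})"
    unfolding Pproj_def by (rule span_sum, rule span_mul, rule span_base) auto
  ultimately show "v \<in> span (e ` {..<N})" by simp
next
  fix v assume "v \<in> span (e ` {..<N})"
  then have "v = P v" using orthonormal_span_expansion[OF orthonormal] by (simp add: Pproj_def)
  then show "v \<in> range P" by blast
qed

lemma Qproj_eq_0_iff: "Q v = 0 \<longleftrightarrow> v \<in> range P"
proof
  assume "Q v = 0"
  then have "v = P v" by (simp add: Qproj_def)
  then show "v \<in> range P" by blast
next
  assume "v \<in> range P"
  then show "Q v = 0" by (intro eq_if_coeffs_eq) (simp add: inner_Qproj range_Pproj)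
qed

lemma continuous_on_semigrp: "continuous_on {0..} (\<lambda>t. S t u)"
  unfolding semigrp_eq_diag_op
  by (rule continuous_on_diag_op) (auto intro!: continuous_intros simp: lam_nonneg)

lemma continuous_on_semigrp_apply:
  assumes v: "continuous_on {a..b} v" and "b \<le> t"
  shows "continuous_on {a..b} (\<lambda>\<tau>. S (t - \<tau>) (v \<tau>))"
  unfolding continuous_on_def
proof
  fix x assume x: "x \<in> {a..b}"
  have pos: "0 \<le> t - \<tau>" if "\<tau> \<in> {a..b}" for \<tau> using that \<open>b \<le> t\<close> by simp
  have "continuous_on {a..b} (\<lambda>\<tau>. S (t - \<tau>) (v x))"
    using pos by (intro continuous_on_compose2[OF continuous_on_semigrp]) (auto intro!: continuous_intros)
  then have lim_fixed: "((\<lambda>\<tau>. S (t - \<tau>) (v x)) \<longlongrightarrow> S (t - x) (v x)) (at x within {a..b})"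
    using x by (simp add: continuous_on_def)
  have "((\<lambda>\<tau>. norm (v \<tau> - v x)) \<longlongrightarrow> 0) (at x within {a..b})"
    using v x by (simp add: continuous_on_def LIM_zero tendsto_norm_zero_iff)
  then have lim_moving: "((\<lambda>\<tau>. S (t - \<tau>) (v \<tau> - v x)) \<longlongrightarrow> 0) (at x within {a..b})"
    by (rule Lim_null_comparison[rotated])
      (auto simp: eventually_at_filter intro!: always_eventually norm_semigrp_le pos)
  have "((\<lambda>\<tau>. S (t - \<tau>) (v \<tau> - v x) + S (t - \<tau>) (v x)) \<longlongrightarrow> 0 + S (t - x) (v x)) (at x within {a..b})"
    by (rule tendsto_add[OF lim_moving lim_fixed])
  moreover have "\<forall>\<^sub>F \<tau> in at x within {a..b}. S (t - \<tau>) (v \<tau> - v x) + S (t - \<tau>) (v x) = S (t - \<tau>) (v \<tau>)"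
    unfolding eventually_at_filter by (intro always_eventually) (use pos in \<open>simp add: semigrp_diff\<close>)
  ultimately show "((\<lambda>\<tau>. S (t - \<tau>) (v \<tau>)) \<longlongrightarrow> S (t - x) (v x)) (at x within {a..b})"
    by (auto elim: Lim_transform_eventually)
qed


section \<open>Duhamel integrals\<close>

definition duhamel :: "(real \<Rightarrow> 'a) \<Rightarrow> real \<Rightarrow> 'a" where
  "duhamel g t = integral {0..t} (\<lambda>\<tau>. S (t - \<tau>) (g \<tau>))"

lemma duhamel_has_integral:
  assumes "continuous_on {0..t} g"
  shows "((\<lambda>\<tau>. S (t - \<tau>) (g \<tau>)) has_integral duhamel g t) {0..t}"
  unfolding duhamel_def
  by (intro integrable_integral integrable_continuous_interval continuous_on_semigrp_apply[OF assms]) simp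

lemma duhamel_0: "duhamel g 0 = 0"
  by (simp add: duhamel_def)

lemma has_integral_duhamel_split:
  assumes g: "continuous_on {0..t} g" and s: "0 \<le> s" "s \<le> t"
  shows "((\<lambda>\<tau>. S (t - \<tau>) (g \<tau>)) has_integral (duhamel g t - S (t - s) (duhamel g s))) {s..t}"
proof -
  have g1: "continuous_on {0..s} g" and g2: "continuous_on {s..t} g"
    using g s by (auto intro: continuous_on_subset)
  have "((\<lambda>\<tau>. S (t - s) (S (s - \<tau>) (g \<tau>))) has_integral S (t - s) (duhamel g s)) {0..s}"
    using has_integral_linear[OF duhamel_has_integral[OF g1] bounded_linear_semigrp, of "t - s"] s
    by (simp add: o_def)
  then have head: "((\<lambda>\<tau>. S (t - \<tau>) (g \<tau>)) has_integral S (t - s) (duhamel g s)) {0..s}"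
    by (rule has_integral_eq[rotated]) (use s in \<open>auto simp: semigrp_semigrp\<close>)
  obtain J where tail: "((\<lambda>\<tau>. S (t - \<tau>) (g \<tau>)) has_integral J) {s..t}"
    using integrable_continuous_interval[OF continuous_on_semigrp_apply[OF g2, of t]] by auto
  have "((\<lambda>\<tau>. S (t - \<tau>) (g \<tau>)) has_integral (S (t - s) (duhamel g s) + J)) {0..t}"
    by (rule has_integral_combine[OF s head tail])
  then have "duhamel g t = S (t - s) (duhamel g s) + J"
    using duhamel_has_integral[OF g] has_integral_unique by blast
  then show ?thesis using tail by simp
qed

lemma norm_duhamel_le:
  assumes g: "continuous_on {0..t} g" and "0 \<le> t" "0 \<le> M"
    and M: "\<And>\<tau>. \<tau> \<in> {0..t} \<Longrightarrow> norm (g \<tau>) \<le> M"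
  shows "norm (duhamel g t) \<le> M * t"
proof -
  have "norm (duhamel g t) \<le> M * (t - 0)"
  proof (rule norm_has_integral_le[OF duhamel_has_integral[OF g]])
    show "norm (S (t - \<tau>) (g \<tau>)) \<le> M" if "\<tau> \<in> {0..t}" for \<tau>
      using that M[OF that] norm_semigrp_le[of "t - \<tau>" "g \<tau>"] by simp
  qed (use assms in auto)
  then show ?thesis by simp
qed

lemma duhamel_diff:
  assumes "continuous_on {0..t} g1" "continuous_on {0..t} g2"
  shows "duhamel g1 t - duhamel g2 t = duhamel (\<lambda>\<tau>. g1 \<tau> - g2 \<tau>) t"
proof -
  have "((\<lambda>\<tau>. S (t - \<tau>) (g1 \<tau>) - S (t - \<tau>) (g2 \<tau>)) has_integral (duhamel g1 t - duhamel g2 t)) {0..t}"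
    using has_integral_diff[OF duhamel_has_integral duhamel_has_integral] assms .
  then have "((\<lambda>\<tau>. S (t - \<tau>) (g1 \<tau> - g2 \<tau>)) has_integral (duhamel g1 t - duhamel g2 t)) {0..t}"
    by (rule has_integral_eq[rotated]) (simp add: semigrp_diff)
  moreover have "((\<lambda>\<tau>. S (t - \<tau>) (g1 \<tau> - g2 \<tau>)) has_integral duhamel (\<lambda>\<tau>. g1 \<tau> - g2 \<tau>) t) {0..t}"
    using assms by (intro duhamel_has_integral continuous_intros)
  ultimately show ?thesis by (rule has_integral_unique)
qed

lemma duhamel_shift:
  assumes g: "continuous_on {0..\<delta> + s} g" and "0 \<le> \<delta>" "0 \<le> s"
  shows "duhamel g (\<delta> + s) = integral {0..\<delta>} (\<lambda>\<tau>. S (\<delta> + s - \<tau>) (g \<tau>)) + duhamel (\<lambda>\<sigma>. g (\<delta> + \<sigma>)) s"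
proof -
  let ?f = "\<lambda>\<tau>. S (\<delta> + s - \<tau>) (g \<tau>)"
  have "continuous_on {0..\<delta>} g" "continuous_on {\<delta>..\<delta> + s} g"
    using g assms(2,3) by (auto intro: continuous_on_subset)
  then have head: "(?f has_integral integral {0..\<delta>} ?f) {0..\<delta>}"
    and "?f integrable_on {\<delta>..\<delta> + s}"
    using \<open>0 \<le> s\<close> by (auto intro!: integrable_integral integrable_continuous_interval continuous_on_semigrp_apply)
  then obtain J where tail: "(?f has_integral J) {\<delta>..\<delta> + s}" by blast
  have "((\<lambda>\<sigma>. S (s - \<sigma>) (g (\<delta> + \<sigma>))) has_integral J) {0..s}"
    using has_integral_shift_Icc_real[of ?f \<delta> J 0 s] tail by (simp add: o_def algebra_simps)
  moreover have "((\<lambda>\<sigma>. S (s - \<sigma>) (g (\<delta> + \<sigma>))) has_integral duhamel (\<lambda>\<sigma>. g (\<delta> + \<sigma>)) s) {0..s}"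
    using \<open>0 \<le> \<delta>\<close> by (intro duhamel_has_integral continuous_on_compose2[OF g]) (auto intro!: continuous_intros)
  ultimately have "J = duhamel (\<lambda>\<sigma>. g (\<delta> + \<sigma>)) s" by (rule has_integral_unique)
  moreover have "(?f has_integral (integral {0..\<delta>} ?f + J)) {0..\<delta> + s}"
    using \<open>0 \<le> \<delta>\<close> \<open>0 \<le> s\<close> by (intro has_integral_combine[OF _ _ head tail]) auto
  ultimately show ?thesis
    using duhamel_has_integral[OF g] has_integral_unique by blast
qed

lemma norm_duhamel_diff_le:
  assumes g: "continuous_on {0..t} g" and s: "0 \<le> s" "s \<le> t"
    and M: "\<And>x. x \<in> {0..t} \<Longrightarrow> norm (g x) \<le> M" and "0 \<le> M"
    and \<eta>: "\<And>\<sigma>. \<sigma> \<in> {0..s} \<Longrightarrow> norm (g ((t - s) + \<sigma>) - g \<sigma>) \<le> \<eta>" and "0 \<le> \<eta>"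
  shows "norm (duhamel g t - duhamel g s) \<le> M * (t - s) + \<eta> * s"
proof -
  define \<delta> where "\<delta> = t - s"
  have \<delta>: "0 \<le> \<delta>" "t = \<delta> + s" using s by (auto simp: \<delta>_def)
  let ?I = "integral {0..\<delta>} (\<lambda>\<tau>. S (t - \<tau>) (g \<tau>))"
  have "continuous_on {0..s} g" "continuous_on {0..s} (\<lambda>\<sigma>. g (\<delta> + \<sigma>))"
    using g \<delta> s by (auto intro!: continuous_on_compose2[OF g] continuous_intros intro: continuous_on_subset)
  then have "duhamel g t - duhamel g s = ?I + duhamel (\<lambda>\<sigma>. g (\<delta> + \<sigma>) - g \<sigma>) s"
    using duhamel_shift[of \<delta> s g] duhamel_diff[of s "\<lambda>\<sigma>. g (\<delta> + \<sigma>)" g] g \<delta> s by simp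
  moreover have "norm ?I \<le> M * (\<delta> - 0)"
  proof (rule norm_has_integral_le[OF integrable_integral])
    show "(\<lambda>\<tau>. S (t - \<tau>) (g \<tau>)) integrable_on {0..\<delta>}"
      using g s by (intro integrable_continuous_interval continuous_on_semigrp_apply)
        (auto simp: \<delta>_def intro: continuous_on_subset)
    show "norm (S (t - \<tau>) (g \<tau>)) \<le> M" if "\<tau> \<in> {0..\<delta>}" for \<tau>
      using that M[of \<tau>] norm_semigrp_le[of "t - \<tau>" "g \<tau>"] \<delta> s by fastforce
  qed (use \<delta> \<open>0 \<le> M\<close> in auto)
  moreover have "norm (duhamel (\<lambda>\<sigma>. g (\<delta> + \<sigma>) - g \<sigma>) s) \<le> \<eta> * s"
    using \<eta> \<open>0 \<le> \<eta>\<close> s \<open>continuous_on {0..s} g\<close> \<open>continuous_on {0..s} (\<lambda>\<sigma>. g (\<delta> + \<sigma>))\<close>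
    by (intro norm_duhamel_le continuous_intros) (auto simp: \<delta>_def)
  ultimately show ?thesis
    using norm_triangle_ineq[of ?I] by (smt (verit) \<delta>_def)
qed

lemma norm_duhamel_diff_small:
  assumes g: "continuous_on {0..T} g" and "\<epsilon> > 0"
  obtains d where "d > 0"
    "\<And>s t. 0 \<le> s \<Longrightarrow> s \<le> t \<Longrightarrow> t \<le> T \<Longrightarrow> t - s < d \<Longrightarrow> norm (duhamel g t - duhamel g s) < \<epsilon>"
proof (cases "T < 0")
  case True
  then show ?thesis using that[of 1] by simp
next
  case False
  obtain M where M: "M > 0" "\<And>x. x \<in> {0..T} \<Longrightarrow> norm (g x) \<le> M"
    using compact_imp_bounded[OF compact_continuous_image[OF g compact_Icc]] unfolding bounded_pos by auto
  define \<eta> where "\<eta> = \<epsilon> / (2 * (T + 1))"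
  have \<eta>: "\<eta> > 0" "\<eta> * T < \<epsilon> / 2" using \<open>\<epsilon> > 0\<close> False by (simp_all add: \<eta>_def field_simps)
  obtain d1 where d1: "d1 > 0" "\<And>x y. x \<in> {0..T} \<Longrightarrow> y \<in> {0..T} \<Longrightarrow> dist y x < d1 \<Longrightarrow> dist (g y) (g x) < \<eta>"
    using compact_uniformly_continuous[OF g compact_Icc] \<eta>(1) unfolding uniformly_continuous_on_def by metis
  define d where "d = min d1 (\<epsilon> / (2 * M))"
  show ?thesis
  proof (rule that)
    show "d > 0" using d1 \<open>\<epsilon> > 0\<close> M by (simp add: d_def)
    fix s t assume st: "0 \<le> s" "s \<le> t" "t \<le> T" "t - s < d"
    have "norm (duhamel g t - duhamel g s) \<le> M * (t - s) + \<eta> * s"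
    proof (rule norm_duhamel_diff_le)
      show "continuous_on {0..t} g" using g st by (auto intro: continuous_on_subset)
      show "norm (g ((t - s) + \<sigma>) - g \<sigma>) \<le> \<eta>" if "\<sigma> \<in> {0..s}" for \<sigma>
        using that st d1(2)[of \<sigma> "(t - s) + \<sigma>"] by (auto simp: d_def dist_norm)
    qed (use st M \<eta> in auto)
    also have "\<dots> < \<epsilon> / 2 + \<epsilon> / 2"
    proof (rule add_le_less_mono)
      have "M * (t - s) \<le> M * (\<epsilon> / (2 * M))" using st M by (intro mult_left_mono) (auto simp: d_def)
      then show "M * (t - s) \<le> \<epsilon> / 2" using M by simp
      have "\<eta> * s \<le> \<eta> * T" using \<eta> st by (intro mult_left_mono) auto
      then show "\<eta> * s < \<epsilon> / 2" using \<eta> by linarith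
    qed
    finally show "norm (duhamel g t - duhamel g s) < \<epsilon>" by simp
  qed
qed

lemma continuous_on_duhamel:
  assumes g: "continuous_on {0..T} g"
  shows "continuous_on {0..T} (duhamel g)"
proof (rule uniformly_continuous_imp_continuous)
  show "uniformly_continuous_on {0..T} (duhamel g)"
    unfolding uniformly_continuous_on_def
  proof (intro allI impI)
    fix \<epsilon> :: real assume "\<epsilon> > 0"
    obtain d where d: "d > 0"
      "\<And>s t. 0 \<le> s \<Longrightarrow> s \<le> t \<Longrightarrow> t \<le> T \<Longrightarrow> t - s < d \<Longrightarrow> norm (duhamel g t - duhamel g s) < \<epsilon>"
      using norm_duhamel_diff_small[OF g \<open>\<epsilon> > 0\<close>] by blast
    show "\<exists>d>0. \<forall>x\<in>{0..T}. \<forall>y\<in>{0..T}. dist y x < d \<longrightarrow> dist (duhamel g y) (duhamel g x) < \<epsilon>"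
    proof (intro exI conjI ballI impI)
      fix x y assume "x \<in> {0..T}" "y \<in> {0..T}" "dist y x < d"
      then show "dist (duhamel g y) (duhamel g x) < \<epsilon>"
        using d(2)[of x y] d(2)[of y x] by (cases "x \<le> y") (auto simp: dist_norm dist_real_def norm_minus_commute)
    qed (rule d(1))
  qed
qed

lemma exp_has_integral:
  fixes c \<gamma> t :: real
  assumes "\<gamma> > 0" "0 \<le> t"
  shows "((\<lambda>\<tau>. c * exp (\<gamma> * \<tau>)) has_integral (c * (exp (\<gamma> * t) - 1) / \<gamma>)) {0..t}"
proof -
  have "((\<lambda>\<tau>. c * exp (\<gamma> * \<tau>)) has_integral (c * exp (\<gamma> * t) / \<gamma> - c * exp (\<gamma> * 0) / \<gamma>)) {0..t}"
  proof (rule fundamental_theorem_of_calculus[where f = "\<lambda>\<tau>. c * exp (\<gamma> * \<tau>) / \<gamma>"])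
    show "((\<lambda>\<tau>. c * exp (\<gamma> * \<tau>) / \<gamma>) has_vector_derivative c * exp (\<gamma> * x)) (at x within {0..t})" for x
      using assms unfolding has_real_derivative_iff_has_vector_derivative[symmetric]
      by (auto intro!: derivative_eq_intros)
  qed (use assms in simp)
  then show ?thesis by (simp add: diff_divide_distrib right_diff_distrib)
qed

lemma norm_duhamel_diff_exp_le:
  assumes g1: "continuous_on {0..t} g1" and g2: "continuous_on {0..t} g2" and "0 \<le> t" "\<gamma> > 0"
    and le: "\<And>\<tau>. \<tau> \<in> {0..t} \<Longrightarrow> norm (g1 \<tau> - g2 \<tau>) \<le> c * exp (\<gamma> * \<tau>)"
  shows "norm (duhamel g1 t - duhamel g2 t) \<le> c * (exp (\<gamma> * t) - 1) / \<gamma>"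
proof -
  have D: "((\<lambda>\<tau>. S (t - \<tau>) (g1 \<tau>) - S (t - \<tau>) (g2 \<tau>)) has_integral (duhamel g1 t - duhamel g2 t)) {0..t}"
    by (rule has_integral_diff[OF duhamel_has_integral[OF g1] duhamel_has_integral[OF g2]])
  have E: "((\<lambda>\<tau>. c * exp (\<gamma> * \<tau>)) has_integral (c * (exp (\<gamma> * t) - 1) / \<gamma>)) {0..t}"
    by (rule exp_has_integral[OF \<open>\<gamma> > 0\<close> \<open>0 \<le> t\<close>])
  have "norm (S (t - \<tau>) (g1 \<tau>) - S (t - \<tau>) (g2 \<tau>)) \<le> c * exp (\<gamma> * \<tau>)" if "\<tau> \<in> {0..t}" for \<tau>
    using that le[OF that] norm_semigrp_le[of "t - \<tau>" "g1 \<tau> - g2 \<tau>"] by (simp add: semigrp_diff)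
  then have "norm (integral {0..t} (\<lambda>\<tau>. S (t - \<tau>) (g1 \<tau>) - S (t - \<tau>) (g2 \<tau>)))
      \<le> integral {0..t} (\<lambda>\<tau>. c * exp (\<gamma> * \<tau>))"
    using D E by (intro integral_norm_bound_integral) blast+
  then show ?thesis
    by (simp only: integral_unique[OF D] integral_unique[OF E])
qed

end

section \<open>Global mild solutions\<close>

locale lipschitz_forcing = diagonal_semigroup e lam N for e :: "nat \<Rightarrow> 'a::{real_inner,banach}" and lam N +
  fixes F :: "'a \<Rightarrow> 'a" and K0 K1 T :: real
  assumes F_lipschitz: "\<forall>u v. norm (F u - F v) \<le> K1 * norm (u - v)"
    and F_bounded: "\<forall>u. norm (F u) \<le> K0"
    and K1_nonneg: "0 \<le> K1" and T_nonneg: "0 \<le> T"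
begin

text \<open>Bielecki's trick: in the variable \<open>w t = exp (- rate * t) *\<^sub>R u t\<close> the Picard map of the mild
  equation \<open>u t = S t \<xi> + duhamel (F \<circ> u) t\<close> is a contraction for the sup norm on \<open>[0, T]\<close>, with
  constant \<open>K1 / rate \<le> 1/2\<close>. Functions on \<open>[0, T]\<close> are extended constantly (\<open>clip\<close>) to bounded
  continuous functions on the line, whose space is complete.\<close>

definition "rate = 2 * K1 + 1"
definition "clip t = max 0 (min T t)"

definition picard_map :: "'a \<Rightarrow> (real \<Rightarrow> 'a) \<Rightarrow> real \<Rightarrow> 'a" where
  "picard_map \<xi> w t = exp (- rate * t) *\<^sub>R (S t \<xi> + duhamel (\<lambda>\<tau>. F (exp (rate * \<tau>) *\<^sub>R w \<tau>)) t)"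

lemma rate_pos: "rate > 0"
  using K1_nonneg by (simp add: rate_def)

lemma clip_in: "clip t \<in> {0..T}"
  using T_nonneg by (auto simp: clip_def)

lemma clip_id: "t \<in> {0..T} \<Longrightarrow> clip t = t"
  by (auto simp: clip_def)

lemma continuous_on_F: "continuous_on A F"
proof (rule lipschitz_on_continuous_on)
  show "K1-lipschitz_on A F"
    using F_lipschitz K1_nonneg by (auto simp: lipschitz_on_def dist_norm)
qed

lemma continuous_on_picard_map:
  assumes "continuous_on {0..T} w"
  shows "continuous_on {0..T} (picard_map \<xi> w)"
proof -
  have "continuous_on {0..T} (\<lambda>\<tau>. F (exp (rate * \<tau>) *\<^sub>R w \<tau>))"
    using assms by (intro continuous_on_compose2[OF continuous_on_F[of UNIV]]) (auto intro!: continuous_intros)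
  then have "continuous_on {0..T} (duhamel (\<lambda>\<tau>. F (exp (rate * \<tau>) *\<^sub>R w \<tau>)))"
    by (rule continuous_on_duhamel)
  moreover have "continuous_on {0..T} (\<lambda>t. S t \<xi>)"
    using continuous_on_semigrp by (rule continuous_on_subset) auto
  ultimately show ?thesis
    unfolding picard_map_def by (intro continuous_intros)
qed

lemma picard_map_clip_bcontfun:
  assumes "continuous_on {0..T} w"
  shows "(\<lambda>t. picard_map \<xi> w (clip t)) \<in> bcontfun"
  unfolding bcontfun_def
proof (intro CollectI conjI)
  have "continuous_on UNIV clip" unfolding clip_def by (intro continuous_intros)
  then show "continuous_on UNIV (\<lambda>t. picard_map \<xi> w (clip t))"
    using continuous_on_compose2[OF continuous_on_picard_map[OF assms]] clip_in by blast
  have "bounded (picard_map \<xi> w ` {0..T})"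
    by (intro compact_imp_bounded compact_continuous_image continuous_on_picard_map[OF assms] compact_Icc)
  moreover have "range (\<lambda>t. picard_map \<xi> w (clip t)) \<subseteq> picard_map \<xi> w ` {0..T}"
    using clip_in by auto
  ultimately show "bounded (range (\<lambda>t. picard_map \<xi> w (clip t)))"
    by (rule bounded_subset)
qed

definition picard :: "'a \<Rightarrow> (real \<Rightarrow>\<^sub>C 'a) \<Rightarrow> (real \<Rightarrow>\<^sub>C 'a)" where
  "picard \<xi> w = Bcontfun (\<lambda>t. picard_map \<xi> (apply_bcontfun w) (clip t))"

lemma picard_apply: "apply_bcontfun (picard \<xi> w) t = picard_map \<xi> (apply_bcontfun w) (clip t)"
  unfolding picard_def by (subst Bcontfun_inverse[OF picard_map_clip_bcontfun]) auto

lemma picard_contraction: "dist (picard \<xi> w1) (picard \<xi> w2) \<le> 1/2 * dist w1 w2"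
proof (rule dist_bound)
  fix t
  define s where "s = clip t"
  define d where "d = dist w1 w2"
  have s: "s \<in> {0..T}" unfolding s_def by (rule clip_in)
  have d: "d \<ge> 0" by (simp add: d_def)
  define g where "g w = (\<lambda>\<tau>. F (exp (rate * \<tau>) *\<^sub>R apply_bcontfun w \<tau>))" for w
  have g_cont: "continuous_on {0..s} (g w)" for w
    unfolding g_def by (intro continuous_on_compose2[OF continuous_on_F[of UNIV]]) (auto intro!: continuous_intros)
  have "norm (duhamel (g w1) s - duhamel (g w2) s) \<le> (K1 * d) * (exp (rate * s) - 1) / rate"
  proof (rule norm_duhamel_diff_exp_le[OF g_cont g_cont _ rate_pos])
    show "0 \<le> s" using s by simp
    fix \<tau> assume "\<tau> \<in> {0..s}"
    have "norm (g w1 \<tau> - g w2 \<tau>) \<le> K1 * norm (exp (rate * \<tau>) *\<^sub>R (w1 \<tau> - w2 \<tau>))"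
      using F_lipschitz by (simp add: g_def scaleR_diff_right)
    also have "\<dots> \<le> K1 * (exp (rate * \<tau>) * d)"
      using dist_bounded[of w1 \<tau> w2] K1_nonneg by (intro mult_left_mono) (auto simp: d_def dist_norm)
    finally show "norm (g w1 \<tau> - g w2 \<tau>) \<le> K1 * d * exp (rate * \<tau>)" by (simp add: mult_ac)
  qed
  then have "exp (- rate * s) * norm (duhamel (g w1) s - duhamel (g w2) s)
      \<le> (K1 * d / rate) * (1 - exp (- rate * s))"
    using rate_pos by (simp add: field_simps exp_minus)
  also have "\<dots> \<le> 1/2 * d"
    using K1_nonneg d rate_pos s
    by (simp add: rate_def field_simps)
  finally show "dist (picard \<xi> w1 t) (picard \<xi> w2 t) \<le> 1/2 * dist w1 w2"
    by (simp add: picard_apply picard_map_def dist_norm d_def s_def g_def flip: scaleR_diff_right)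
qed

lemma picard_dist_initial: "dist (picard \<xi>1 w) (picard \<xi>2 w) \<le> norm (\<xi>1 - \<xi>2)"
proof (rule dist_bound)
  fix t
  define s where "s = clip t"
  have s: "s \<in> {0..T}" unfolding s_def by (rule clip_in)
  have "picard \<xi>1 w t - picard \<xi>2 w t = exp (- rate * s) *\<^sub>R S s (\<xi>1 - \<xi>2)"
    using s by (simp add: picard_apply picard_map_def s_def semigrp_diff flip: scaleR_diff_right)
  then have "dist (picard \<xi>1 w t) (picard \<xi>2 w t) = exp (- rate * s) * norm (S s (\<xi>1 - \<xi>2))"
    by (simp add: dist_norm)
  also have "\<dots> \<le> 1 * norm (\<xi>1 - \<xi>2)"
    using s rate_pos by (intro mult_mono norm_semigrp_le) auto
  finally show "dist (picard \<xi>1 w t) (picard \<xi>2 w t) \<le> norm (\<xi>1 - \<xi>2)" by simp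
qed

definition weighted_sol :: "'a \<Rightarrow> (real \<Rightarrow>\<^sub>C 'a)" where
  "weighted_sol \<xi> = (THE w. picard \<xi> w = w)"

lemma picard_weighted_sol: "picard \<xi> (weighted_sol \<xi>) = weighted_sol \<xi>"
proof -
  have "\<exists>!w. picard \<xi> w = w"
    by (rule banach_fix_type[of "1/2"]) (use picard_contraction in auto)
  then show ?thesis unfolding weighted_sol_def by (rule theI')
qed

lemma dist_weighted_sol_le: "dist (weighted_sol \<xi>1) (weighted_sol \<xi>2) \<le> 2 * norm (\<xi>1 - \<xi>2)"
proof -
  let ?w1 = "weighted_sol \<xi>1" and ?w2 = "weighted_sol \<xi>2"
  have "dist ?w1 ?w2 = dist (picard \<xi>1 ?w1) (picard \<xi>2 ?w2)" by (simp add: picard_weighted_sol)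
  also have "\<dots> \<le> dist (picard \<xi>1 ?w1) (picard \<xi>1 ?w2) + dist (picard \<xi>1 ?w2) (picard \<xi>2 ?w2)"
    by (rule dist_triangle)
  also have "\<dots> \<le> 1/2 * dist ?w1 ?w2 + norm (\<xi>1 - \<xi>2)"
    using picard_contraction picard_dist_initial by (rule add_mono)
  finally show ?thesis by simp
qed

definition mild_sol :: "'a \<Rightarrow> real \<Rightarrow> 'a" where
  "mild_sol \<xi> t = exp (rate * t) *\<^sub>R apply_bcontfun (weighted_sol \<xi>) t"

lemma continuous_on_mild_sol: "continuous_on A (mild_sol \<xi>)"
  unfolding mild_sol_def by (intro continuous_intros) auto

lemma continuous_on_F_mild_sol: "continuous_on A (\<lambda>\<tau>. F (mild_sol \<xi> \<tau>))"
  by (rule continuous_on_compose2[OF continuous_on_F[of UNIV] continuous_on_mild_sol]) auto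

lemma mild_sol_eq:
  assumes "t \<in> {0..T}"
  shows "mild_sol \<xi> t = S t \<xi> + duhamel (\<lambda>\<tau>. F (mild_sol \<xi> \<tau>)) t"
proof -
  have "apply_bcontfun (weighted_sol \<xi>) t = apply_bcontfun (picard \<xi> (weighted_sol \<xi>)) t"
    by (simp only: picard_weighted_sol)
  also have "\<dots> = picard_map \<xi> (weighted_sol \<xi>) t"
    using assms by (simp add: picard_apply clip_id)
  finally have "apply_bcontfun (weighted_sol \<xi>) t = picard_map \<xi> (weighted_sol \<xi>) t" .
  then show ?thesis
    by (simp add: mild_sol_def picard_map_def exp_minus field_simps)
qed

lemma mild_sol_0: "mild_sol \<xi> 0 = \<xi>"
  using mild_sol_eq[of 0 \<xi>] T_nonneg by (simp add: semigrp_0 duhamel_0)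

lemma mild_sol_has_integral:
  assumes st: "0 \<le> s" "s \<le> t" "t \<le> T"
  shows "((\<lambda>\<tau>. S (t - \<tau>) (F (mild_sol \<xi> \<tau>))) has_integral (mild_sol \<xi> t - S (t - s) (mild_sol \<xi> s))) {s..t}"
proof -
  let ?g = "\<lambda>\<tau>. F (mild_sol \<xi> \<tau>)"
  have "mild_sol \<xi> t - S (t - s) (mild_sol \<xi> s) = S t \<xi> + duhamel ?g t - S (t - s) (S s \<xi> + duhamel ?g s)"
    using mild_sol_eq[of t \<xi>] mild_sol_eq[of s \<xi>] st by simp
  also have "\<dots> = duhamel ?g t - S (t - s) (duhamel ?g s)"
    using st by (simp add: semigrp_add semigrp_semigrp)
  finally have "mild_sol \<xi> t - S (t - s) (mild_sol \<xi> s) = duhamel ?g t - S (t - s) (duhamel ?g s)" .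
  then show ?thesis
    using has_integral_duhamel_split[OF continuous_on_F_mild_sol st(1,2)] by simp
qed

lemma norm_duhamel_F_mild_sol_le:
  assumes "t \<in> {0..T}"
  shows "norm (duhamel (\<lambda>\<tau>. F (mild_sol \<xi> \<tau>)) t) \<le> K0 * T"
proof -
  have K0: "0 \<le> K0" using F_bounded norm_ge_zero order_trans by blast
  have "norm (duhamel (\<lambda>\<tau>. F (mild_sol \<xi> \<tau>)) t) \<le> K0 * t"
    using assms K0 F_bounded by (intro norm_duhamel_le continuous_on_F_mild_sol) auto
  also have "\<dots> \<le> K0 * T" using assms K0 by (intro mult_left_mono) auto
  finally show ?thesis .
qed

lemma norm_mild_sol_diff_le: "norm (mild_sol \<xi>1 T - mild_sol \<xi>2 T) \<le> exp (rate * T) * 2 * norm (\<xi>1 - \<xi>2)"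
proof -
  have "mild_sol \<xi>1 T - mild_sol \<xi>2 T
      = exp (rate * T) *\<^sub>R (apply_bcontfun (weighted_sol \<xi>1) T - apply_bcontfun (weighted_sol \<xi>2) T)"
    by (simp add: mild_sol_def scaleR_diff_right)
  moreover have "norm (apply_bcontfun (weighted_sol \<xi>1) T - apply_bcontfun (weighted_sol \<xi>2) T) \<le> 2 * norm (\<xi>1 - \<xi>2)"
    using dist_bounded[of "weighted_sol \<xi>1" T "weighted_sol \<xi>2"] dist_weighted_sol_le[of \<xi>1 \<xi>2]
    by (simp add: dist_norm)
  ultimately show ?thesis by (simp add: mult.assoc mult_left_mono)
qed

lemma mild_sol_commuting_has_integral:
  assumes st: "0 \<le> s" "s \<le> t" "t \<le> T" and L: "bounded_linear L"
    and LS: "\<And>r x. r \<ge> 0 \<Longrightarrow> L (S r x) = S r (L x)"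
  shows "((\<lambda>\<tau>. S (t - \<tau>) (L (F (mild_sol \<xi> \<tau>)))) has_integral
    (L (mild_sol \<xi> t) - S (t - s) (L (mild_sol \<xi> s)))) {s..t}"
proof -
  have "((\<lambda>\<tau>. L (S (t - \<tau>) (F (mild_sol \<xi> \<tau>)))) has_integral L (mild_sol \<xi> t - S (t - s) (mild_sol \<xi> s))) {s..t}"
    using has_integral_linear[OF mild_sol_has_integral[OF st] L] by (simp add: o_def)
  moreover have "L (mild_sol \<xi> t - S (t - s) (mild_sol \<xi> s)) = L (mild_sol \<xi> t) - S (t - s) (L (mild_sol \<xi> s))"
    using st by (simp add: linear_diff[OF bounded_linear.linear[OF L]] LS)
  ultimately have "((\<lambda>\<tau>. L (S (t - \<tau>) (F (mild_sol \<xi> \<tau>)))) has_integral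
      (L (mild_sol \<xi> t) - S (t - s) (L (mild_sol \<xi> s)))) {s..t}" by simp
  then show ?thesis
    by (rule has_integral_eq[rotated]) (simp add: LS)
qed


section \<open>Shooting\<close>

definition inv_semigrp_T :: "'a \<Rightarrow> 'a" where
  "inv_semigrp_T v = (\<Sum>k<N. (exp (lam k * T) * (v \<bullet> e k)) *\<^sub>R e k)"

lemma inner_inv_semigrp_T: "inv_semigrp_T v \<bullet> e j = (if j < N then exp (lam j * T) * (v \<bullet> e j) else 0)"
  by (simp add: inv_semigrp_T_def inner_sum_left inner_basis if_distrib cong: if_cong)

lemma inv_semigrp_T_in_range: "inv_semigrp_T v \<in> range P"
  unfolding range_Pproj by (simp add: inner_inv_semigrp_T)

lemma semigrp_inv_semigrp_T: "v \<in> range P \<Longrightarrow> S T (inv_semigrp_T v) = v"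
  by (rule eq_if_coeffs_eq) (use T_nonneg in \<open>auto simp: inner_semigrp inner_inv_semigrp_T range_Pproj exp_minus field_simps\<close>)

lemma bounded_linear_inv_semigrp_T: "bounded_linear inv_semigrp_T"
  unfolding inv_semigrp_T_def
  by (intro bounded_linear_sum bounded_linear_compose[OF bounded_linear_scaleR_left]
      bounded_linear_mult_right[THEN bounded_linear_compose] bounded_linear_inner_left)

definition shooting_defect :: "'a \<Rightarrow> 'a" where
  "shooting_defect \<xi> = P (mild_sol \<xi> T) - S T \<xi>"

lemma continuous_on_shooting_defect: "continuous_on A shooting_defect"
proof -
  have "(exp (rate * T) * 2)-lipschitz_on A (\<lambda>\<xi>. mild_sol \<xi> T)"
    using norm_mild_sol_diff_le rate_pos by (auto simp: lipschitz_on_def dist_norm)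
  then have "continuous_on A (\<lambda>\<xi>. mild_sol \<xi> T)" by (rule lipschitz_on_continuous_on)
  then show ?thesis
    unfolding shooting_defect_def using T_nonneg
    by (intro continuous_on_diff bounded_linear.continuous_on[OF bounded_linear_Pproj]
        bounded_linear.continuous_on[OF bounded_linear_semigrp continuous_on_id]) auto
qed

lemma shooting_defect_eq:
  assumes "\<xi> \<in> range P"
  shows "shooting_defect \<xi> = P (duhamel (\<lambda>\<tau>. F (mild_sol \<xi> \<tau>)) T)"
proof -
  have "P (S T \<xi>) = S T \<xi>"
    using assms T_nonneg by (simp add: Pproj_semigrp Qproj_eq_0_iff[symmetric] Qproj_def)
  then show ?thesis
    using mild_sol_eq[of T \<xi>] T_nonneg
    by (simp add: shooting_defect_def linear_add[OF bounded_linear.linear[OF bounded_linear_Pproj]])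
qed

lemma norm_shooting_defect_le:
  assumes "\<xi> \<in> range P"
  shows "norm (shooting_defect \<xi>) \<le> K0 * T"
  unfolding shooting_defect_eq[OF assms]
  by (rule order_trans[OF norm_Pproj_le norm_duhamel_F_mild_sol_le]) (use T_nonneg in simp)

lemma shooting_defect_in_range: "\<xi> \<in> range P \<Longrightarrow> shooting_defect \<xi> \<in> range P"
  by (simp add: shooting_defect_eq)

text \<open>As \<open>shooting_defect\<close> is bounded by \<open>K0 * T\<close> on \<open>range P\<close>, the map
  \<open>\<xi> \<mapsto> inv_semigrp_T (p0 - shooting_defect \<xi>)\<close> sends the ball of radius \<open>R\<close> in the
  \<open>N\<close>-dimensional space \<open>range P\<close> into itself; Brouwer's theorem applies after rescaling.\<close>

lemma shooting_fixpoint: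
  assumes N: "1 \<le> N" and p0: "p0 \<in> range P"
  obtains \<xi> where "\<xi> \<in> range P" "inv_semigrp_T (p0 - shooting_defect \<xi>) = \<xi>"
proof -
  obtain C where C: "C > 0" "\<And>v. norm (inv_semigrp_T v) \<le> norm v * C"
    using bounded_linear.pos_bounded[OF bounded_linear_inv_semigrp_T] by blast
  define R where "R = C * (norm p0 + K0 * T) + 1"
  have K0: "0 \<le> K0" using F_bounded norm_ge_zero order_trans by blast
  have R: "R > 0" using C K0 T_nonneg by (simp add: R_def add_nonneg_pos)
  define V where "V = span (e ` {..<N})"
  have V: "range P = V" by (simp add: V_def range_Pproj_eq_span)
  define f where "f x = inverse R *\<^sub>R inv_semigrp_T (p0 - shooting_defect (R *\<^sub>R x))" for x
  have "continuous_on (V \<inter> cball 0 1) f"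
    unfolding f_def
    by (intro continuous_intros continuous_on_compose2[OF bounded_linear.continuous_on[OF bounded_linear_inv_semigrp_T continuous_on_id]]
        continuous_on_compose2[OF continuous_on_shooting_defect[of UNIV]]) auto
  moreover have "f \<in> V \<inter> cball 0 1 \<rightarrow> V \<inter> cball 0 1"
  proof
    fix x assume x: "x \<in> V \<inter> cball 0 1"
    then have "R *\<^sub>R x \<in> range P" using V by (auto simp: V_def span_mul)
    then have "norm (p0 - shooting_defect (R *\<^sub>R x)) \<le> norm p0 + K0 * T"
      using norm_shooting_defect_le norm_triangle_ineq4[of p0 "shooting_defect (R *\<^sub>R x)"] by fastforce
    then have "norm (p0 - shooting_defect (R *\<^sub>R x)) * C \<le> (norm p0 + K0 * T) * C"
      using C(1) by (simp add: mult_right_mono)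
    then have "norm (inv_semigrp_T (p0 - shooting_defect (R *\<^sub>R x))) \<le> R"
      using C(2)[of "p0 - shooting_defect (R *\<^sub>R x)"] by (simp add: R_def mult.commute)
    then have "norm (f x) \<le> 1" using R by (simp add: f_def field_simps)
    moreover have "f x \<in> V" using inv_semigrp_T_in_range V by (auto simp: f_def V_def intro: span_mul)
    ultimately show "f x \<in> V \<inter> cball 0 1" by auto
  qed
  ultimately obtain x where x: "x \<in> V \<inter> cball 0 1" "f x = x"
    using fixpoint_subspace_unit_ball[OF _ not_contractible_orthonormal_sphere[OF orthonormal N]]
    unfolding V_def by blast
  have "R *\<^sub>R f x = R *\<^sub>R x" using x(2) by simp
  then have "inv_semigrp_T (p0 - shooting_defect (R *\<^sub>R x)) = R *\<^sub>R x"
    using R by (simp add: f_def)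
  moreover have "R *\<^sub>R x \<in> range P" using x V by (auto simp: V_def span_mul)
  ultimately show ?thesis by (rule that[rotated])
qed

lemma shooting:
  assumes "1 \<le> N" and p0: "p0 \<in> range P"
  obtains \<xi> where "\<xi> \<in> range P" "P (mild_sol \<xi> T) = p0"
proof -
  obtain \<xi> where \<xi>: "\<xi> \<in> range P" and fixed: "inv_semigrp_T (p0 - shooting_defect \<xi>) = \<xi>"
    using shooting_fixpoint[OF assms] .
  have "p0 - shooting_defect \<xi> \<in> range P"
    using p0 shooting_defect_in_range[OF \<xi>] unfolding range_Pproj by (simp add: inner_diff_left)
  then have "S T \<xi> = p0 - shooting_defect \<xi>"
    using semigrp_inv_semigrp_T fixed by metis
  then show ?thesis
    using that[OF \<xi>] by (simp add: shooting_defect_def)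
qed

end

definition mild_PQ_solution ::
  "(nat \<Rightarrow> 'a::{real_inner,complete_space}) \<Rightarrow> (nat \<Rightarrow> real) \<Rightarrow> nat \<Rightarrow> ('a \<Rightarrow> 'a) \<Rightarrow> real
    \<Rightarrow> (real \<Rightarrow> 'a) \<Rightarrow> (real \<Rightarrow> 'a) \<Rightarrow> bool" where
  "mild_PQ_solution e lam N F T p q \<longleftrightarrow>
     continuous_on {0..T} p \<and> continuous_on {0..T} q \<and>
     (\<forall>t\<in>{0..T}. p t \<in> range (Pproj e N) \<and> q t \<in> range (Qproj e N)) \<and>
     (\<forall>s t. 0 \<le> s \<and> s \<le> t \<and> t \<le> T \<longrightarrow>
        ((\<lambda>\<tau>. semigrp e lam (t - \<tau>) (Pproj e N (F (p \<tau> + q \<tau>))))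
            has_integral (p t - semigrp e lam (t - s) (p s))) {s..t} \<and>
        ((\<lambda>\<tau>. semigrp e lam (t - \<tau>) (Qproj e N (F (p \<tau> + q \<tau>))))
            has_integral (q t - semigrp e lam (t - s) (q s))) {s..t})"

theorem (in lipschitz_forcing) mild_PQ_solution_exists:
  assumes "1 \<le> N" and "p0 \<in> range P"
  obtains p q where "mild_PQ_solution e lam N F T p q" "p T = p0" "q 0 = 0"
proof -
  obtain \<xi> where \<xi>: "\<xi> \<in> range P" "P (mild_sol \<xi> T) = p0"
    using shooting[OF assms] .
  define p where "p t = P (mild_sol \<xi> t)" for t
  define q where "q t = Q (mild_sol \<xi> t)" for t
  have pq: "p t + q t = mild_sol \<xi> t" for t by (simp add: p_def q_def Qproj_def)
  show ?thesis
  proof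
    show "mild_PQ_solution e lam N F T p q"
      unfolding mild_PQ_solution_def
    proof (intro conjI ballI allI impI)
      show "continuous_on {0..T} p" "continuous_on {0..T} q"
        unfolding p_def q_def
        by (intro bounded_linear.continuous_on[OF bounded_linear_Pproj] bounded_linear.continuous_on[OF bounded_linear_Qproj]
            continuous_on_mild_sol)+
      show "p t \<in> range P" "q t \<in> range Q" for t by (simp_all add: p_def q_def)
      fix s t :: real assume "0 \<le> s \<and> s \<le> t \<and> t \<le> T"
      then show "((\<lambda>\<tau>. S (t - \<tau>) (P (F (p \<tau> + q \<tau>)))) has_integral (p t - S (t - s) (p s))) {s..t}"
        "((\<lambda>\<tau>. S (t - \<tau>) (Q (F (p \<tau> + q \<tau>)))) has_integral (q t - S (t - s) (q s))) {s..t}"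
        unfolding pq unfolding p_def q_def
        by (auto intro!: mild_sol_commuting_has_integral bounded_linear_Pproj bounded_linear_Qproj
            Pproj_semigrp Qproj_semigrp)
    qed
    show "p T = p0" using \<xi> by (simp add: p_def)
    show "q 0 = 0" using \<xi>(1) by (simp add: q_def mild_sol_0 Qproj_eq_0_iff)
  qed
qed

section \<open>Complete inner product spaces\<close>

text \<open>The sort \<open>{real_inner, complete_space}\<close> of the theorem does not entail \<open>banach\<close>, which the
  integration theory needs; an isomorphic type copy is an instance of both.\<close>

typedef 'a hilbert = "UNIV :: 'a::{real_inner,complete_space} set"
  morphisms of_hilbert to_hilbert by auto

setup_lifting type_definition_hilbert

instantiation hilbert :: ("{real_inner,complete_space}") real_inner
begin

lift_definition zero_hilbert :: "'a hilbert" is 0 .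
lift_definition plus_hilbert :: "'a hilbert \<Rightarrow> 'a hilbert \<Rightarrow> 'a hilbert" is "(+)" .
lift_definition minus_hilbert :: "'a hilbert \<Rightarrow> 'a hilbert \<Rightarrow> 'a hilbert" is "(-)" .
lift_definition uminus_hilbert :: "'a hilbert \<Rightarrow> 'a hilbert" is uminus .
lift_definition scaleR_hilbert :: "real \<Rightarrow> 'a hilbert \<Rightarrow> 'a hilbert" is scaleR .
lift_definition norm_hilbert :: "'a hilbert \<Rightarrow> real" is norm .
lift_definition sgn_hilbert :: "'a hilbert \<Rightarrow> 'a hilbert" is sgn .
lift_definition dist_hilbert :: "'a hilbert \<Rightarrow> 'a hilbert \<Rightarrow> real" is dist .
lift_definition inner_hilbert :: "'a hilbert \<Rightarrow> 'a hilbert \<Rightarrow> real" is inner .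

definition uniformity_hilbert :: "('a hilbert \<times> 'a hilbert) filter" where
  "uniformity_hilbert = (INF e\<in>{0<..}. principal {(x, y). dist x y < e})"

definition open_hilbert :: "'a hilbert set \<Rightarrow> bool" where
  "open_hilbert U \<longleftrightarrow> (\<forall>x\<in>U. eventually (\<lambda>(x', y). x' = x \<longrightarrow> y \<in> U) uniformity)"

instance
proof
  show "(uniformity :: ('a hilbert \<times> 'a hilbert) filter) = (INF e\<in>{0<..}. principal {(x, y). dist x y < e})"
    by (simp add: uniformity_hilbert_def)
  show "open U \<longleftrightarrow> (\<forall>x\<in>U. \<forall>\<^sub>F (x', y) in uniformity. x' = x \<longrightarrow> y \<in> U)" for U :: "'a hilbert set"
    by (simp add: open_hilbert_def)
qed (transfer; simp add: algebra_simps scaleR_add_right scaleR_add_left sgn_div_norm dist_norm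
      inner_commute inner_add_left norm_eq_sqrt_inner)+

end

lemma of_hilbert_add: "of_hilbert (x + y) = of_hilbert x + of_hilbert y" by transfer simp
lemma of_hilbert_diff: "of_hilbert (x - y) = of_hilbert x - of_hilbert y" by transfer simp
lemma of_hilbert_scaleR: "of_hilbert (c *\<^sub>R x) = c *\<^sub>R of_hilbert x" by transfer simp
lemma of_hilbert_0: "of_hilbert 0 = 0" by transfer simp
lemma norm_of_hilbert: "norm (of_hilbert x) = norm x" by transfer simp
lemma dist_of_hilbert: "dist (of_hilbert x) (of_hilbert y) = dist x y" by transfer simp
lemma inner_of_hilbert: "of_hilbert x \<bullet> of_hilbert y = x \<bullet> y" by transfer simp

instance hilbert :: ("{real_inner,complete_space}") complete_space
proof
  fix X :: "nat \<Rightarrow> 'a hilbert" assume "Cauchy X"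
  then have "Cauchy (\<lambda>n. of_hilbert (X n))" by (simp add: Cauchy_def dist_of_hilbert)
  then obtain L where L: "(\<lambda>n. of_hilbert (X n)) \<longlonglongrightarrow> L" using Cauchy_convergent convergent_def by blast
  have "X \<longlonglongrightarrow> to_hilbert L"
    using L unfolding lim_sequentially by (metis to_hilbert_inverse dist_of_hilbert UNIV_I)
  then show "convergent X" by (auto simp: convergent_def)
qed

instance hilbert :: ("{real_inner,complete_space}") banach ..

lemma bounded_linear_of_hilbert: "bounded_linear of_hilbert"
  by (rule bounded_linear_intro[where K = 1]) (simp_all add: of_hilbert_add of_hilbert_scaleR norm_of_hilbert)

lemma bounded_linear_to_hilbert: "bounded_linear (to_hilbert :: 'a::{real_inner,complete_space} \<Rightarrow> 'a hilbert)"
proof (rule bounded_linear_intro[where K = 1])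
  show "to_hilbert (x + y) = to_hilbert x + to_hilbert y" for x y :: 'a
    by (metis to_hilbert_inverse of_hilbert_add of_hilbert_inject UNIV_I)
  show "to_hilbert (r *\<^sub>R x) = r *\<^sub>R to_hilbert x" for r and x :: 'a
    by (metis to_hilbert_inverse of_hilbert_scaleR of_hilbert_inject UNIV_I)
  show "norm (to_hilbert x) \<le> norm x * 1" for x :: 'a
    by (metis norm_of_hilbert to_hilbert_inverse UNIV_I order_refl mult_1_right)
qed

context
  fixes e :: "nat \<Rightarrow> 'a::{real_inner,complete_space}"
  assumes orthonormal: "\<forall>j k. e j \<bullet> e k = (if j = k then 1 else 0)"
    and expansion: "\<forall>u. (\<lambda>k. (u \<bullet> e k) *\<^sub>R e k) sums u"
begin

lemma orthonormal_basis_to_hilbert: "orthonormal_basis (\<lambda>k. to_hilbert (e k))"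
proof
  show "\<forall>j k. to_hilbert (e j) \<bullet> to_hilbert (e k) = (if j = k then 1 else 0)"
    using orthonormal by (simp add: inner_of_hilbert[symmetric] to_hilbert_inverse)
  show "\<forall>u. (\<lambda>k. (u \<bullet> to_hilbert (e k)) *\<^sub>R to_hilbert (e k)) sums u"
  proof
    fix u :: "'a hilbert"
    have "(\<lambda>k. to_hilbert ((of_hilbert u \<bullet> e k) *\<^sub>R e k)) sums to_hilbert (of_hilbert u)"
      by (rule bounded_linear.sums[OF bounded_linear_to_hilbert expansion[rule_format]])
    then show "(\<lambda>k. (u \<bullet> to_hilbert (e k)) *\<^sub>R to_hilbert (e k)) sums u"
      by (simp add: of_hilbert_inverse inner_of_hilbert[symmetric] to_hilbert_inverse
          linear_scale[OF bounded_linear.linear[OF bounded_linear_to_hilbert]])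
  qed
qed

lemma of_hilbert_Pproj: "of_hilbert (Pproj (\<lambda>k. to_hilbert (e k)) N v) = Pproj e N (of_hilbert v)"
  by (simp add: Pproj_def linear_sum[OF bounded_linear.linear[OF bounded_linear_of_hilbert]]
      of_hilbert_scaleR to_hilbert_inverse inner_of_hilbert[symmetric])

lemma of_hilbert_Qproj: "of_hilbert (Qproj (\<lambda>k. to_hilbert (e k)) N v) = Qproj e N (of_hilbert v)"
  by (simp add: Qproj_def of_hilbert_diff of_hilbert_Pproj)

lemma of_hilbert_semigrp:
  assumes "\<And>k. 0 \<le> lam k" and "0 \<le> t"
  shows "of_hilbert (semigrp (\<lambda>k. to_hilbert (e k)) lam t v) = semigrp e lam t (of_hilbert v)"
proof -
  interpret orthonormal_basis "\<lambda>k. to_hilbert (e k)"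
    by (rule orthonormal_basis_to_hilbert)
  have "\<bar>exp (- lam k * t)\<bar> \<le> 1" for k
    using assms by simp
  then have "summable (\<lambda>k. (exp (- lam k * t) * (v \<bullet> to_hilbert (e k))) *\<^sub>R to_hilbert (e k))"
    by (rule summable_diag_op)
  from bounded_linear.suminf[OF bounded_linear_of_hilbert this] show ?thesis
    by (simp add: semigrp_def of_hilbert_scaleR to_hilbert_inverse inner_of_hilbert[symmetric])
qed

lemma mild_PQ_solution_of_hilbert:
  assumes lam: "\<And>k. 0 \<le> lam k"
    and sol: "mild_PQ_solution (\<lambda>k. to_hilbert (e k)) lam N (\<lambda>v. to_hilbert (F (of_hilbert v))) T p q"
  shows "mild_PQ_solution e lam N F T (\<lambda>t. of_hilbert (p t)) (\<lambda>t. of_hilbert (q t))"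
  unfolding mild_PQ_solution_def
proof (intro conjI ballI allI impI)
  show "continuous_on {0..T} (\<lambda>t. of_hilbert (p t))" "continuous_on {0..T} (\<lambda>t. of_hilbert (q t))"
    using sol[unfolded mild_PQ_solution_def] by (auto intro: bounded_linear.continuous_on[OF bounded_linear_of_hilbert])
  fix t assume "t \<in> {0..T}"
  then obtain a b where "p t = Pproj (\<lambda>k. to_hilbert (e k)) N a" "q t = Qproj (\<lambda>k. to_hilbert (e k)) N b"
    using sol[unfolded mild_PQ_solution_def] by blast
  then show "of_hilbert (p t) \<in> range (Pproj e N)" "of_hilbert (q t) \<in> range (Qproj e N)"
    by (simp_all add: of_hilbert_Pproj of_hilbert_Qproj)
next
  fix s t :: real assume st: "0 \<le> s \<and> s \<le> t \<and> t \<le> T"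
  have F: "of_hilbert (to_hilbert (F (of_hilbert (p \<tau> + q \<tau>)))) = F (of_hilbert (p \<tau>) + of_hilbert (q \<tau>))" for \<tau>
    by (simp add: to_hilbert_inverse of_hilbert_add)
  have S: "of_hilbert (semigrp (\<lambda>k. to_hilbert (e k)) lam (t - \<tau>) v) = semigrp e lam (t - \<tau>) (of_hilbert v)"
    if "\<tau> \<le> t" for \<tau> v
    using of_hilbert_semigrp[OF lam, of "t - \<tau>"] that by simp
  have eq_rhs: "of_hilbert (r t - semigrp (\<lambda>k. to_hilbert (e k)) lam (t - s) (r s))
      = of_hilbert (r t) - semigrp e lam (t - s) (of_hilbert (r s))" for r
    using S[of s] st by (simp add: of_hilbert_diff)
  note integrals = sol[unfolded mild_PQ_solution_def, THEN conjunct2, THEN conjunct2, THEN conjunct2,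
      rule_format, OF st]
  show "((\<lambda>\<tau>. semigrp e lam (t - \<tau>) (Pproj e N (F (of_hilbert (p \<tau>) + of_hilbert (q \<tau>)))))
      has_integral (of_hilbert (p t) - semigrp e lam (t - s) (of_hilbert (p s)))) {s..t}"
    using has_integral_linear[OF integrals[THEN conjunct1] bounded_linear_of_hilbert] unfolding o_def eq_rhs
    by (rule has_integral_eq[rotated]) (simp add: S of_hilbert_Pproj F)
  show "((\<lambda>\<tau>. semigrp e lam (t - \<tau>) (Qproj e N (F (of_hilbert (p \<tau>) + of_hilbert (q \<tau>)))))
      has_integral (of_hilbert (q t) - semigrp e lam (t - s) (of_hilbert (q s)))) {s..t}"
    using has_integral_linear[OF integrals[THEN conjunct2] bounded_linear_of_hilbert] unfolding o_def eq_rhs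
    by (rule has_integral_eq[rotated]) (simp add: S of_hilbert_Qproj F)
qed

theorem mild_PQ_solution_exists_complete:
  assumes lam: "\<And>k. 0 \<le> lam k"
    and F_lipschitz: "\<forall>u v. norm (F u - F v) \<le> K1 * norm (u - v)" and "0 \<le> K1"
    and F_bounded: "\<forall>u. norm (F u) \<le> K0"
    and "0 \<le> T" "1 \<le> N" and p0: "p0 \<in> range (Pproj e N)"
  obtains p q where "mild_PQ_solution e lam N F T p q" "p T = p0" "q 0 = 0"
proof -
  let ?F = "\<lambda>v. to_hilbert (F (of_hilbert v))"
  interpret lipschitz_forcing "\<lambda>k. to_hilbert (e k)" lam N ?F K0 K1 T
  proof (intro_locales)
    show "orthonormal_basis (\<lambda>k. to_hilbert (e k))" by (rule orthonormal_basis_to_hilbert)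
    show "diagonal_semigroup_axioms lam" by unfold_locales (rule lam)
    show "lipschitz_forcing_axioms ?F K0 K1 T"
      using F_lipschitz F_bounded assms(3,5)
      by unfold_locales (simp_all add: to_hilbert_inverse norm_of_hilbert[symmetric] of_hilbert_diff)
  qed
  obtain u where "p0 = Pproj e N u" using p0 by blast
  then have "of_hilbert (P (to_hilbert u)) = p0" by (simp add: of_hilbert_Pproj to_hilbert_inverse)
  then have "to_hilbert p0 \<in> range P" by (metis of_hilbert_inverse rangeI)
  then obtain p q where sol: "mild_PQ_solution (\<lambda>k. to_hilbert (e k)) lam N ?F T p q"
    and "p T = to_hilbert p0" "q 0 = 0"
    by (rule mild_PQ_solution_exists[OF \<open>1 \<le> N\<close>])
  then have "of_hilbert (p T) = p0" "of_hilbert (q 0) = 0" by (simp_all add: to_hilbert_inverse of_hilbert_0)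
  with mild_PQ_solution_of_hilbert[OF lam sol] show ?thesis by (rule that)
qed

end

theorem lemma2p1:
  fixes e :: "nat \<Rightarrow> 'a::{real_inner,complete_space}"
    and lam :: "nat \<Rightarrow> real" and F :: "'a \<Rightarrow> 'a"
    and N n :: nat and K0 K1 R :: real and p0 :: 'a
  assumes orthonormal: "\<forall>j k. e j \<bullet> e k = (if j = k then 1 else 0)"
    and basis: "\<forall>u. (\<lambda>k. (u \<bullet> e k) *\<^sub>R e k) sums u"
    and lam_pos: "0 < lam 0"
    and lam_simple: "lam 0 < lam 1"
    and lam_mono: "mono lam"
    and lam_unbounded: "filterlim lam at_top sequentially"
    and N_pos: "1 \<le> N"
    and gap: "lam (N - 1) < lam N"
    and K0_pos: "0 < K0" and K1_pos: "0 < K1" and K1_gap: "K1 < lam N"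
    and R_pos: "0 < R"
    and F_bounded: "\<forall>u. norm (F u) \<le> K0"
    and F_lipschitz: "\<forall>u v. norm (F u - F v) \<le> K1 * norm (u - v)"
    and F_support: "\<forall>u. R \<le> norm u \<longrightarrow> F u = 0"
    and p0: "p0 \<in> range (Pproj e N)"
  shows "\<exists>p q :: real \<Rightarrow> 'a.
     continuous_on {0..real n} p \<and> continuous_on {0..real n} q \<and>
     (\<forall>t\<in>{0..real n}. p t \<in> range (Pproj e N) \<and> q t \<in> range (Qproj e N)) \<and>
     (\<forall>s t. 0 \<le> s \<and> s \<le> t \<and> t \<le> real n \<longrightarrow>
        ((\<lambda>\<tau>. semigrp e lam (t - \<tau>) (Pproj e N (F (p \<tau> + q \<tau>))))
            has_integral (p t - semigrp e lam (t - s) (p s))) {s..t} \<and>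
        ((\<lambda>\<tau>. semigrp e lam (t - \<tau>) (Qproj e N (F (p \<tau> + q \<tau>))))
            has_integral (q t - semigrp e lam (t - s) (q s))) {s..t}) \<and>
     p (real n) = p0 \<and> q 0 = 0"
proof -
  have lam_nonneg: "0 \<le> lam k" for k
    using lam_pos monoD[OF lam_mono, of 0 k] by simp
  obtain p q where "mild_PQ_solution e lam N F (real n) p q" "p (real n) = p0" "q 0 = 0"
    by (rule mild_PQ_solution_exists_complete[OF orthonormal basis lam_nonneg F_lipschitz
          less_imp_le[OF K1_pos] F_bounded of_nat_0_le_iff N_pos p0])
  then have "\<exists>p q. mild_PQ_solution e lam N F (real n) p q \<and> p (real n) = p0 \<and> q 0 = 0"
    by blast
  then show ?thesis
    by (simp only: mild_PQ_solution_def conj_assoc)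
qed

end
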